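(* Let $\phi\colon\mathbb{R}\to\mathbb{R}$ be an increasing homeomorphism with $\phi(0)=0$, let $f\colon\mathbb{R}\to\mathbb{R}$ be continuous and let $h\colon[0,T]\times\mathbb{R}\to\mathbb{R}$ be a Carathéodory function such that there exists $\gamma\in L^1([0,T],\mathbb{R}^+)$ with $h(t,u)\le\gamma(t)$ for a.e. $t\in[0,T]$ and all $u\in\mathbb{R}$. For $\lambda\in\,]0,1]$ consider $$(\phi(u'))'+\lambda f(u)u'+\lambda h(t,u)=0. \qquad (\ast_\lambda)$$ Then there exists a constant $K_0=K_0(\gamma)$ such that every $T$-periodic solution $u$ of $(\ast_\lambda)$ with $\lambda\in\,]0,1]$ satisfies $\max u-\min u\le K_0$ and $\|u'\|_{L^1}\le K_0$. Moreover, for any $\ell_1<\ell_2$ there exists $K_1>0$ such that every $T$-periodic solution $u$ of $(\ast_\lambda)$ with $\lambda\in\,]0,1]$ and $\ell_1\le u(t)\le\ell_2$ for all $t\in[0,T]$ satisfies $\|u'\|_\infty\le K_1$.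
   Context: A $T$-periodic solution is a $u\in\mathcal{C}^1([0,T])$ with $u(0)=u(T)$, $u'(0)=u'(T)$, $\phi(u')$ absolutely continuous, satisfying the equation a.e. A Carathéodory function is measurable in $t$, continuous in $u$, and for each $r>0$ bounded in absolute value on $[0,T]\times[-r,r]$ by an $L^1$ function of $t$. $\mathbb{R}^+$ denotes the nonnegative reals. *)

theory Defs
  imports "HOL-Analysis.Analysis"
begin

definition abs_cont_on :: "real \<Rightarrow> real \<Rightarrow> (real \<Rightarrow> real) \<Rightarrow> bool" where
  "abs_cont_on a b g \<longleftrightarrow>
     (\<forall>\<epsilon>>0. \<exists>\<delta>>0. \<forall>(n::nat) (x::nat \<Rightarrow> real) (y::nat \<Rightarrow> real).
        (\<forall>i<n. a \<le> x i \<and> x i \<le> y i \<and> y i \<le> b) \<and>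
        (\<forall>i<n. \<forall>j<n. i \<noteq> j \<longrightarrow> y i \<le> x j \<or> y j \<le> x i) \<and>
        (\<Sum>i<n. y i - x i) < \<delta>
        \<longrightarrow> (\<Sum>i<n. \<bar>g (y i) - g (x i)\<bar>) < \<epsilon>)"

definition caratheodory :: "real \<Rightarrow> (real \<Rightarrow> real \<Rightarrow> real) \<Rightarrow> bool" where
  "caratheodory T h \<longleftrightarrow>
     (\<forall>u. (\<lambda>t. h t u) \<in> borel_measurable (lebesgue_on {0..T})) \<and>
     (\<forall>t\<in>{0..T}. continuous_on UNIV (h t)) \<and>
     (\<forall>r>0. \<exists>m. m integrable_on {0..T} \<and>
        (\<forall>t\<in>{0..T}. \<forall>u. \<bar>u\<bar> \<le> r \<longrightarrow> \<bar>h t u\<bar> \<le> m t))"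

definition periodic_solution ::
  "(real \<Rightarrow> real) \<Rightarrow> (real \<Rightarrow> real) \<Rightarrow> (real \<Rightarrow> real \<Rightarrow> real) \<Rightarrow> real \<Rightarrow> real
   \<Rightarrow> (real \<Rightarrow> real) \<Rightarrow> (real \<Rightarrow> real) \<Rightarrow> bool" where
  "periodic_solution \<phi> f h T lam u u' \<longleftrightarrow>
     (\<forall>t\<in>{0..T}. (u has_real_derivative u' t) (at t within {0..T})) \<and>
     continuous_on {0..T} u' \<and>
     u 0 = u T \<and> u' 0 = u' T \<and>
     abs_cont_on 0 T (\<lambda>t. \<phi> (u' t)) \<and>
     (AE t in lebesgue. t \<in> {0..T} \<longrightarrow>
        (\<exists>D. ((\<lambda>s. \<phi> (u' s)) has_real_derivative D) (at t) \<and>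
             D + lam * f (u t) * u' t + lam * h t (u t) = 0))"

end

theory Submission
  imports Defs
begin

text \<open>Multiplying the equation by \<open>u - min u\<close> and integrating over a period, the \<open>f\<close>-term is the
  derivative of a function of \<open>u\<close> and integrates to zero by periodicity, while the \<open>h\<close>-term is
  at most \<open>(max u - min u) \<parallel>\<gamma>\<parallel>\<^sub>1 \<le> \<parallel>u'\<parallel>\<^sub>1 \<parallel>\<gamma>\<parallel>\<^sub>1\<close>. Hence \<open>\<integral> \<phi>(u') u' \<le> \<parallel>\<gamma>\<parallel>\<^sub>1 \<parallel>u'\<parallel>\<^sub>1\<close>, and since an
  increasing homeomorphism satisfies \<open>\<phi>(s) s \<ge> c \<bar>s\<bar> - c S\<close> for \<open>c = \<parallel>\<gamma>\<parallel>\<^sub>1 + 1\<close>, this bounds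
  \<open>\<parallel>u'\<parallel>\<^sub>1\<close> and with it the oscillation of \<open>u\<close>. If moreover \<open>u\<close> takes values in \<open>[l1, l2]\<close>,
  the equation bounds \<open>(\<phi>(u'))'\<close> in \<open>L\<^sup>1\<close>; integrating from a zero of \<open>u'\<close> bounds \<open>\<phi>(u')\<close>, hence \<open>u'\<close>.
  As \<open>\<phi>(u')\<close> is only absolutely continuous, both integrations rest on a Henstock-Kurzweil
  estimate for absolutely continuous functions whose derivative is bounded below almost everywhere.\<close>

definition nonoverlapping_intervals :: "real \<Rightarrow> real \<Rightarrow> nat \<Rightarrow> (nat \<Rightarrow> real) \<Rightarrow> (nat \<Rightarrow> real) \<Rightarrow> bool"
  where "nonoverlapping_intervals a b n x y \<longleftrightarrow>
    (\<forall>i<n. a \<le> x i \<and> x i \<le> y i \<and> y i \<le> b) \<and> (\<forall>i<n. \<forall>j<n. i \<noteq> j \<longrightarrow> y i \<le> x j \<or> y j \<le> x i)"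

lemma abs_cont_on_iff:
  "abs_cont_on a b g \<longleftrightarrow> (\<forall>e>0. \<exists>\<delta>>0. \<forall>n x y. nonoverlapping_intervals a b n x y \<longrightarrow>
     (\<Sum>i<n. y i - x i) < \<delta> \<longrightarrow> (\<Sum>i<n. \<bar>g (y i) - g (x i)\<bar>) < e)"
  unfolding abs_cont_on_def nonoverlapping_intervals_def by (simp add: imp_conjL)

lemma abs_cont_onD:
  assumes "abs_cont_on a b g" "e > 0"
  shows "\<exists>\<delta>>0. \<forall>n x y. nonoverlapping_intervals a b n x y \<longrightarrow>
     (\<Sum>i<n. y i - x i) < \<delta> \<longrightarrow> (\<Sum>i<n. \<bar>g (y i) - g (x i)\<bar>) < e"
  using assms unfolding abs_cont_on_iff by blast

lemma abs_cont_onI: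
  assumes "\<And>e. e > 0 \<Longrightarrow> \<exists>\<delta>>0. \<forall>n x y. nonoverlapping_intervals a b n x y \<longrightarrow>
     (\<Sum>i<n. y i - x i) < \<delta> \<longrightarrow> (\<Sum>i<n. \<bar>g (y i) - g (x i)\<bar>) < e"
  shows "abs_cont_on a b g"
  using assms unfolding abs_cont_on_iff by simp

lemma abs_cont_on_subinterval:
  assumes "abs_cont_on a b g" "a \<le> a'" "b' \<le> b"
  shows "abs_cont_on a' b' g"
proof (rule abs_cont_onI)
  fix e :: real assume "e > 0"
  then obtain \<delta> where "\<delta> > 0" and \<delta>: "\<forall>n x y. nonoverlapping_intervals a b n x y \<longrightarrow>
      (\<Sum>i<n. y i - x i) < \<delta> \<longrightarrow> (\<Sum>i<n. \<bar>g (y i) - g (x i)\<bar>) < e"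
    using abs_cont_onD[OF assms(1)] by blast
  have "nonoverlapping_intervals a b n x y" if "nonoverlapping_intervals a' b' n x y" for n x y
    using that assms(2,3) unfolding nonoverlapping_intervals_def by force
  with \<delta> \<open>\<delta> > 0\<close> show "\<exists>\<delta>>0. \<forall>n x y. nonoverlapping_intervals a' b' n x y \<longrightarrow>
      (\<Sum>i<n. y i - x i) < \<delta> \<longrightarrow> (\<Sum>i<n. \<bar>g (y i) - g (x i)\<bar>) < e"
    by (intro exI[of _ \<delta>]) simp
qed

lemma abs_cont_on_ident: "abs_cont_on a b (\<lambda>x. x)"
proof (rule abs_cont_onI)
  fix e :: real assume "e > 0"
  have "(\<Sum>i<n. \<bar>y i - x i\<bar>) = (\<Sum>i<n. y i - x i)" if "nonoverlapping_intervals a b n x y" for n x y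
    using that unfolding nonoverlapping_intervals_def by (intro sum.cong) auto
  with \<open>e > 0\<close> show "\<exists>\<delta>>0. \<forall>n x y. nonoverlapping_intervals a b n x y \<longrightarrow>
      (\<Sum>i<n. y i - x i) < \<delta> \<longrightarrow> (\<Sum>i<n. \<bar>y i - x i\<bar>) < e"
    by (intro exI[of _ e]) simp
qed

lemma abs_cont_on_finite_family:
  fixes g :: "real \<Rightarrow> real"
  assumes "abs_cont_on a b g" "e > 0"
  shows "\<exists>\<delta>>0. \<forall>(I::'i set) c d. finite I \<longrightarrow> (\<forall>i\<in>I. a \<le> c i \<and> c i \<le> d i \<and> d i \<le> b) \<longrightarrow>
       (\<forall>i\<in>I. \<forall>j\<in>I. i \<noteq> j \<longrightarrow> d i \<le> c j \<or> d j \<le> c i) \<longrightarrow> (\<Sum>i\<in>I. d i - c i) < \<delta> \<longrightarrow>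
       (\<Sum>i\<in>I. \<bar>g (d i) - g (c i)\<bar>) < e"
proof -
  obtain \<delta> where "\<delta> > 0" and \<delta>: "\<forall>n x y. nonoverlapping_intervals a b n x y \<longrightarrow>
      (\<Sum>i<n. y i - x i) < \<delta> \<longrightarrow> (\<Sum>i<n. \<bar>g (y i) - g (x i)\<bar>) < e"
    using abs_cont_onD[OF assms] by blast
  have "(\<Sum>i\<in>I. \<bar>g (d i) - g (c i)\<bar>) < e"
    if fin: "finite I" and inside: "\<forall>i\<in>I. a \<le> c i \<and> c i \<le> d i \<and> d i \<le> b"
      and disj: "\<forall>i\<in>I. \<forall>j\<in>I. i \<noteq> j \<longrightarrow> d i \<le> c j \<or> d j \<le> c i"
      and small: "(\<Sum>i\<in>I. d i - c i) < \<delta>"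
    for I :: "'i set" and c d
  proof -
    obtain \<sigma> where \<sigma>: "bij_betw \<sigma> {..<card I} I"
      using ex_bij_betw_nat_finite[OF fin] lessThan_atLeast0 by metis
    have reindex: "(\<Sum>i<card I. F (\<sigma> i)) = (\<Sum>i\<in>I. F i)" for F :: "'i \<Rightarrow> real"
      using sum.reindex_bij_betw[OF \<sigma>] .
    have "nonoverlapping_intervals a b (card I) (\<lambda>i. c (\<sigma> i)) (\<lambda>i. d (\<sigma> i))"
      using \<sigma> inside disj unfolding nonoverlapping_intervals_def bij_betw_def inj_on_def
      by (metis image_eqI lessThan_iff)
    then have "(\<Sum>i<card I. \<bar>g (d (\<sigma> i)) - g (c (\<sigma> i))\<bar>) < e"
      using \<delta> small reindex[of "\<lambda>i. d i - c i"] by simp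
    then show ?thesis
      using reindex[of "\<lambda>i. \<bar>g (d i) - g (c i)\<bar>"] by simp
  qed
  with \<open>\<delta> > 0\<close> show ?thesis by blast
qed

lemma abs_cont_on_dominated:
  fixes f g H :: "real \<Rightarrow> real"
  assumes f: "abs_cont_on a b f" and g: "abs_cont_on a b g"
    and dom: "\<And>x y. x \<in> {a..b} \<Longrightarrow> y \<in> {a..b} \<Longrightarrow>
      \<bar>H y - H x\<bar> \<le> C * (\<bar>f y - f x\<bar> + \<bar>g y - g x\<bar>)"
  shows "abs_cont_on a b H"
proof (rule abs_cont_onI)
  fix e :: real assume "e > 0"
  define C' where "C' = \<bar>C\<bar> + 1"
  have "C' > 0" by (simp add: C'_def)
  then have e': "e / (2 * C') > 0" using \<open>e > 0\<close> by simp
  obtain \<delta>f where "\<delta>f > 0" and \<delta>f: "\<forall>n x y. nonoverlapping_intervals a b n x y \<longrightarrow>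
      (\<Sum>i<n. y i - x i) < \<delta>f \<longrightarrow> (\<Sum>i<n. \<bar>f (y i) - f (x i)\<bar>) < e / (2 * C')"
    using abs_cont_onD[OF f e'] by blast
  obtain \<delta>g where "\<delta>g > 0" and \<delta>g: "\<forall>n x y. nonoverlapping_intervals a b n x y \<longrightarrow>
      (\<Sum>i<n. y i - x i) < \<delta>g \<longrightarrow> (\<Sum>i<n. \<bar>g (y i) - g (x i)\<bar>) < e / (2 * C')"
    using abs_cont_onD[OF g e'] by blast
  have "(\<Sum>i<n. \<bar>H (y i) - H (x i)\<bar>) < e"
    if family: "nonoverlapping_intervals a b n x y" and small: "(\<Sum>i<n. y i - x i) < min \<delta>f \<delta>g"
    for n x y
  proof -
    have "(\<Sum>i<n. \<bar>H (y i) - H (x i)\<bar>)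
        \<le> (\<Sum>i<n. C' * (\<bar>f (y i) - f (x i)\<bar> + \<bar>g (y i) - g (x i)\<bar>))"
    proof (rule sum_mono)
      fix i assume "i \<in> {..<n}"
      then have "x i \<in> {a..b}" "y i \<in> {a..b}"
        using family unfolding nonoverlapping_intervals_def by auto
      then have "\<bar>H (y i) - H (x i)\<bar> \<le> C * (\<bar>f (y i) - f (x i)\<bar> + \<bar>g (y i) - g (x i)\<bar>)"
        by (rule dom)
      also have "\<dots> \<le> C' * (\<bar>f (y i) - f (x i)\<bar> + \<bar>g (y i) - g (x i)\<bar>)"
        by (rule mult_right_mono) (auto simp: C'_def)
      finally show "\<bar>H (y i) - H (x i)\<bar> \<le> C' * (\<bar>f (y i) - f (x i)\<bar> + \<bar>g (y i) - g (x i)\<bar>)" .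
    qed
    also have "\<dots> = C' * (\<Sum>i<n. \<bar>f (y i) - f (x i)\<bar>) + C' * (\<Sum>i<n. \<bar>g (y i) - g (x i)\<bar>)"
      by (simp add: sum.distrib sum_distrib_left distrib_left)
    also have "\<dots> < C' * (e / (2 * C')) + C' * (e / (2 * C'))"
      using \<delta>f[rule_format, OF family] \<delta>g[rule_format, OF family] small \<open>C' > 0\<close>
      by (intro add_strict_mono mult_strict_left_mono) auto
    also have "\<dots> = e" using \<open>C' > 0\<close> by (simp add: field_simps)
    finally show ?thesis .
  qed
  then show "\<exists>\<delta>>0. \<forall>n x y. nonoverlapping_intervals a b n x y \<longrightarrow>
      (\<Sum>i<n. y i - x i) < \<delta> \<longrightarrow> (\<Sum>i<n. \<bar>H (y i) - H (x i)\<bar>) < e"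
    using \<open>\<delta>f > 0\<close> \<open>\<delta>g > 0\<close> by (intro exI[of _ "min \<delta>f \<delta>g"]) simp
qed

lemma abs_cont_on_add:
  assumes "abs_cont_on a b f" "abs_cont_on a b g"
  shows "abs_cont_on a b (\<lambda>t. f t + g t)"
  by (rule abs_cont_on_dominated[OF assms, where C = 1]) (simp add: abs_diff_triangle_ineq)

lemma abs_cont_on_uminus:
  assumes "abs_cont_on a b g"
  shows "abs_cont_on a b (\<lambda>t. - g t)"
  by (rule abs_cont_on_dominated[OF assms assms, where C = 1]) (simp add: abs_minus_commute)

lemma abs_cont_on_mult:
  fixes f g :: "real \<Rightarrow> real"
  assumes "abs_cont_on a b f" "abs_cont_on a b g"
    and f_bound: "\<And>t. t \<in> {a..b} \<Longrightarrow> \<bar>f t\<bar> \<le> B" and g_bound: "\<And>t. t \<in> {a..b} \<Longrightarrow> \<bar>g t\<bar> \<le> B"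
  shows "abs_cont_on a b (\<lambda>t. f t * g t)"
proof (rule abs_cont_on_dominated[OF assms(1,2), where C = B])
  fix x y assume "x \<in> {a..b}" "y \<in> {a..b}"
  have "\<bar>f y * g y - f x * g x\<bar> = \<bar>f y * (g y - g x) + g x * (f y - f x)\<bar>"
    by (simp add: algebra_simps)
  also have "\<dots> \<le> \<bar>f y\<bar> * \<bar>g y - g x\<bar> + \<bar>g x\<bar> * \<bar>f y - f x\<bar>"
    by (metis abs_mult abs_triangle_ineq)
  also have "\<dots> \<le> B * \<bar>g y - g x\<bar> + B * \<bar>f y - f x\<bar>"
    using f_bound[OF \<open>y \<in> {a..b}\<close>] g_bound[OF \<open>x \<in> {a..b}\<close>]
    by (intro add_mono mult_right_mono) auto
  finally show "\<bar>f y * g y - f x * g x\<bar> \<le> B * (\<bar>f y - f x\<bar> + \<bar>g y - g x\<bar>)"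
    by (simp add: algebra_simps)
qed

lemma continuous_on_Icc_abs_bound:
  fixes g :: "real \<Rightarrow> real"
  assumes "continuous_on {a..b} g"
  obtains B where "\<And>t. t \<in> {a..b} \<Longrightarrow> \<bar>g t\<bar> \<le> B"
proof -
  have "bounded (g ` {a..b})"
    using compact_continuous_image[OF assms compact_Icc] by (rule compact_imp_bounded)
  then obtain B where "\<forall>y\<in>g ` {a..b}. norm y \<le> B"
    unfolding bounded_iff by blast
  then show thesis using that[of B] by simp
qed

lemma abs_cont_on_C1:
  fixes g g' :: "real \<Rightarrow> real"
  assumes deriv: "\<And>t. t \<in> {a..b} \<Longrightarrow> (g has_real_derivative g' t) (at t within {a..b})"
    and cont: "continuous_on {a..b} g'"
  shows "abs_cont_on a b g"
proof -
  obtain B where B: "\<And>t. t \<in> {a..b} \<Longrightarrow> norm (g' t) \<le> B"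
    using continuous_on_Icc_abs_bound[OF cont] by auto
  show ?thesis
  proof (rule abs_cont_on_dominated[OF abs_cont_on_ident abs_cont_on_ident, where C = "\<bar>B\<bar>"])
    fix x y assume "x \<in> {a..b}" "y \<in> {a..b}"
    then have "\<bar>g y - g x\<bar> \<le> B * \<bar>y - x\<bar>"
      using field_differentiable_bound[of "{a..b}" g g' B y x] deriv B by auto
    also have "\<dots> \<le> \<bar>B\<bar> * (\<bar>y - x\<bar> + \<bar>y - x\<bar>)"
      by (intro mult_mono) auto
    finally show "\<bar>g y - g x\<bar> \<le> \<bar>B\<bar> * (\<bar>y - x\<bar> + \<bar>y - x\<bar>)" .
  qed
qed

lemma tagged_division_of_real_elem:
  fixes a b :: real
  assumes "\<D> tagged_division_of {a..b}" "(x, K) \<in> \<D>"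
  shows "K = {Inf K..Sup K}" "a \<le> Inf K" "Inf K \<le> x" "x \<le> Sup K" "Sup K \<le> b"
proof -
  obtain c d where K: "K = {c..d}"
    using tagged_division_ofD(4)[OF assms] by (metis cbox_interval)
  have "x \<in> K" "K \<subseteq> {a..b}" using tagged_division_ofD(2,3)[OF assms] by auto
  then have "c \<le> d" "Inf K = c" "Sup K = d" using K by auto
  then show "K = {Inf K..Sup K}" "a \<le> Inf K" "Inf K \<le> x" "x \<le> Sup K" "Sup K \<le> b"
    using K \<open>x \<in> K\<close> \<open>K \<subseteq> {a..b}\<close> by auto
qed

lemma tagged_division_of_real_nonoverlapping:
  fixes a b :: real
  assumes \<D>: "\<D> tagged_division_of {a..b}"
    and p: "(x, K) \<in> \<D>" "(x', K') \<in> \<D>" "(x, K) \<noteq> (x', K')"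
    and nondegenerate: "Inf K < Sup K" "Inf K' < Sup K'"
  shows "Sup K \<le> Inf K' \<or> Sup K' \<le> Inf K"
proof (rule ccontr)
  assume "\<not> (Sup K \<le> Inf K' \<or> Sup K' \<le> Inf K)"
  then have "(max (Inf K) (Inf K') + min (Sup K) (Sup K')) / 2 \<in> {Inf K<..<Sup K} \<inter> {Inf K'<..<Sup K'}"
    using nondegenerate by (auto simp: max_def min_def)
  moreover have "interior K = {Inf K<..<Sup K}" "interior K' = {Inf K'<..<Sup K'}"
    using arg_cong[OF tagged_division_of_real_elem(1)[OF \<D> p(1)], of interior]
      arg_cong[OF tagged_division_of_real_elem(1)[OF \<D> p(2)], of interior]
    by simp_all
  ultimately show False
    using tagged_division_ofD(5)[OF \<D> p] by auto
qed

lemma abs_cont_on_tagged_division: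
  fixes g :: "real \<Rightarrow> real"
  assumes ac: "abs_cont_on a b g" and e: "e > 0"
  shows "\<exists>\<delta>>0. \<forall>\<D> \<E>. \<D> tagged_division_of {a..b} \<longrightarrow> \<E> \<subseteq> \<D> \<longrightarrow>
      (\<Sum>(x, K)\<in>\<E>. measure lborel K) < \<delta> \<longrightarrow> (\<Sum>(x, K)\<in>\<E>. \<bar>g (Sup K) - g (Inf K)\<bar>) < e"
proof -
  obtain \<delta> where "\<delta> > 0" and ac\<delta>: "\<forall>(I::(real \<times> real set) set) c d. finite I \<longrightarrow>
      (\<forall>i\<in>I. a \<le> c i \<and> c i \<le> d i \<and> d i \<le> b) \<longrightarrow>
      (\<forall>i\<in>I. \<forall>j\<in>I. i \<noteq> j \<longrightarrow> d i \<le> c j \<or> d j \<le> c i) \<longrightarrow> (\<Sum>i\<in>I. d i - c i) < \<delta> \<longrightarrow>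
      (\<Sum>i\<in>I. \<bar>g (d i) - g (c i)\<bar>) < e"
    using abs_cont_on_finite_family[OF ac e] by blast
  have "(\<Sum>(x, K)\<in>\<E>. \<bar>g (Sup K) - g (Inf K)\<bar>) < e"
    if \<D>: "\<D> tagged_division_of {a..b}" and "\<E> \<subseteq> \<D>" and small: "(\<Sum>(x, K)\<in>\<E>. measure lborel K) < \<delta>"
    for \<D> \<E>
  proof -
    have fin: "finite \<E>" using \<open>\<E> \<subseteq> \<D>\<close> tagged_division_of_finite[OF \<D>] finite_subset by blast
    have elem: "a \<le> Inf (snd p)" "Inf (snd p) \<le> Sup (snd p)" "Sup (snd p) \<le> b" if "p \<in> \<E>" for p
      using tagged_division_of_real_elem(2-5)[OF \<D>, of "fst p" "snd p"] that \<open>\<E> \<subseteq> \<D>\<close> by auto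
    define \<E>' where "\<E>' = {p \<in> \<E>. Inf (snd p) < Sup (snd p)}"
    have "\<E>' \<subseteq> \<E>" by (auto simp: \<E>'_def)
    have degenerate: "Inf (snd p) = Sup (snd p)" if "p \<in> \<E> - \<E>'" for p
      using that elem(2)[of p] unfolding \<E>'_def by auto
    have "measure lborel (snd p) = Sup (snd p) - Inf (snd p)" if "p \<in> \<E>" for p
      using arg_cong[OF tagged_division_of_real_elem(1)[OF \<D>, of "fst p" "snd p"], of "measure lborel"]
        elem(2)[OF that] that \<open>\<E> \<subseteq> \<D>\<close> by auto
    then have "(\<Sum>i\<in>\<E>'. Sup (snd i) - Inf (snd i)) = (\<Sum>i\<in>\<E>'. measure lborel (snd i))"
      using \<open>\<E>' \<subseteq> \<E>\<close> by (intro sum.cong) auto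
    also have "\<dots> \<le> (\<Sum>i\<in>\<E>. measure lborel (snd i))"
      by (intro sum_mono2 fin \<open>\<E>' \<subseteq> \<E>\<close>) simp
    finally have short: "(\<Sum>i\<in>\<E>'. Sup (snd i) - Inf (snd i)) < \<delta>"
      using small by (simp add: case_prod_unfold)
    have inside: "\<forall>i\<in>\<E>'. a \<le> Inf (snd i) \<and> Inf (snd i) \<le> Sup (snd i) \<and> Sup (snd i) \<le> b"
      using elem \<open>\<E>' \<subseteq> \<E>\<close> by blast
    have "Sup (snd i) \<le> Inf (snd j) \<or> Sup (snd j) \<le> Inf (snd i)" if "i \<in> \<E>'" "j \<in> \<E>'" "i \<noteq> j" for i j
      using tagged_division_of_real_nonoverlapping[OF \<D>, of "fst i" "snd i" "fst j" "snd j"]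
        that \<open>\<E> \<subseteq> \<D>\<close> unfolding \<E>'_def by auto
    then have "(\<Sum>i\<in>\<E>'. \<bar>g (Sup (snd i)) - g (Inf (snd i))\<bar>) < e"
      using ac\<delta>[rule_format, of \<E>' "\<lambda>i. Inf (snd i)" "\<lambda>i. Sup (snd i)",
          OF finite_subset[OF \<open>\<E>' \<subseteq> \<E>\<close> fin] inside[rule_format] _ short]
      by blast
    also have "(\<Sum>i\<in>\<E>'. \<bar>g (Sup (snd i)) - g (Inf (snd i))\<bar>) = (\<Sum>i\<in>\<E>. \<bar>g (Sup (snd i)) - g (Inf (snd i))\<bar>)"
      using degenerate by (intro sum.mono_neutral_left fin \<open>\<E>' \<subseteq> \<E>\<close>) auto
    finally show ?thesis by (simp add: case_prod_unfold)
  qed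
  with \<open>\<delta> > 0\<close> show ?thesis by blast
qed

lemma has_real_derivative_straddle:
  fixes g :: "real \<Rightarrow> real"
  assumes "(g has_real_derivative D) (at t)" "e > 0"
  shows "\<exists>r>0. \<forall>x y. x \<le> t \<longrightarrow> t \<le> y \<longrightarrow> {x..y} \<subseteq> ball t r \<longrightarrow> (D - e) * (y - x) \<le> g y - g x"
proof -
  from assms(1) have "\<forall>e>0. \<exists>r>0. \<forall>y. \<bar>y - t\<bar> < r \<longrightarrow> \<bar>g y - g t - D * (y - t)\<bar> \<le> e * \<bar>y - t\<bar>"
    unfolding has_field_derivative_def has_derivative_at_alt by simp
  with assms(2) obtain r where "r > 0"
    and r: "\<forall>y. \<bar>y - t\<bar> < r \<longrightarrow> \<bar>g y - g t - D * (y - t)\<bar> \<le> e * \<bar>y - t\<bar>"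
    by blast
  have "(D - e) * (y - x) \<le> g y - g x" if "x \<le> t" "t \<le> y" "{x..y} \<subseteq> ball t r" for x y
  proof -
    have "x \<in> {x..y}" "y \<in> {x..y}" using that(1,2) by auto
    then have "\<bar>x - t\<bar> < r" "\<bar>y - t\<bar> < r"
      using that(3) by (auto simp: dist_real_def subset_iff)
    then have "\<bar>g y - g t - D * (y - t)\<bar> \<le> e * \<bar>y - t\<bar>" "\<bar>g x - g t - D * (x - t)\<bar> \<le> e * \<bar>x - t\<bar>"
      using r by auto
    moreover have "\<bar>y - t\<bar> = y - t" "\<bar>x - t\<bar> = t - x" using that(1,2) by auto
    ultimately show ?thesis
      by (simp add: algebra_simps abs_le_iff)
  qed
  with \<open>r > 0\<close> show ?thesis by blast
qed

lemma AE_lower_derivative_gauge: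
  fixes g \<beta> :: "real \<Rightarrow> real"
  assumes der: "AE t in lebesgue. t \<in> S \<longrightarrow> (\<exists>D. (g has_real_derivative D) (at t) \<and> \<beta> t \<le> D)"
    and e: "e > 0"
  shows "\<exists>N d. negligible N \<and> gauge d \<and> (\<forall>t x y. t \<in> S - N \<longrightarrow> x \<le> t \<longrightarrow> t \<le> y \<longrightarrow>
      {x..y} \<subseteq> d t \<longrightarrow> (\<beta> t - e) * (y - x) \<le> g y - g x)"
proof -
  obtain N where good: "\<And>t. t \<in> UNIV - N \<Longrightarrow> t \<in> S \<longrightarrow> (\<exists>D. (g has_real_derivative D) (at t) \<and> \<beta> t \<le> D)"
    and "N \<in> null_sets lebesgue"
    using AE_E3[OF der] by auto
  have radius: "\<exists>r>0. t \<in> S - N \<longrightarrow>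
      (\<forall>x y. x \<le> t \<longrightarrow> t \<le> y \<longrightarrow> {x..y} \<subseteq> ball t r \<longrightarrow> (\<beta> t - e) * (y - x) \<le> g y - g x)" for t
  proof (cases "t \<in> S - N")
    case True
    then obtain D where D: "(g has_real_derivative D) (at t)" "\<beta> t \<le> D" using good by blast
    obtain r where "r > 0"
      and r: "\<forall>x y. x \<le> t \<longrightarrow> t \<le> y \<longrightarrow> {x..y} \<subseteq> ball t r \<longrightarrow> (D - e) * (y - x) \<le> g y - g x"
      using has_real_derivative_straddle[OF D(1) e] by blast
    have "(\<beta> t - e) * (y - x) \<le> g y - g x" if "x \<le> t" "t \<le> y" "{x..y} \<subseteq> ball t r" for x y
    proof -
      have "(\<beta> t - e) * (y - x) \<le> (D - e) * (y - x)"
        using D(2) that(1,2) by (intro mult_right_mono) auto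
      then show ?thesis using r[rule_format, OF that] by linarith
    qed
    with \<open>r > 0\<close> show ?thesis by blast
  next
    case False
    then show ?thesis by (intro exI[of _ 1]) auto
  qed
  from choice[OF allI[OF radius]] obtain r where r: "\<forall>t. r t > 0 \<and> (t \<in> S - N \<longrightarrow>
      (\<forall>x y. x \<le> t \<longrightarrow> t \<le> y \<longrightarrow> {x..y} \<subseteq> ball t (r t) \<longrightarrow> (\<beta> t - e) * (y - x) \<le> g y - g x))"
    by (rule exE)
  have "negligible N" using \<open>N \<in> null_sets lebesgue\<close> by (simp add: negligible_iff_null_sets)
  moreover have "gauge (\<lambda>t. ball t (r t))" using r by (simp add: gauge_def)
  ultimately show ?thesis
    using r by (intro exI[of _ N] exI[of _ "\<lambda>t. ball t (r t)"]) simp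
qed

lemma negligible_tagged_division_small:
  fixes a b :: real
  assumes "negligible N" "\<delta> > 0"
  shows "\<exists>d. gauge d \<and> (\<forall>\<D>. \<D> tagged_division_of {a..b} \<and> d fine \<D> \<longrightarrow>
    (\<Sum>(x, K)\<in>{p \<in> \<D>. fst p \<in> N}. measure lborel K) < \<delta>)"
proof -
  have "(indicat_real N has_integral 0) (cbox a b)"
    using \<open>negligible N\<close> unfolding negligible_def by blast
  from this[unfolded cbox_interval has_integral_real, rule_format, OF \<open>\<delta> > 0\<close>] obtain d where "gauge d"
    and d: "\<forall>\<D>. \<D> tagged_division_of {a..b} \<and> d fine \<D> \<longrightarrow>
      norm ((\<Sum>(x, K)\<in>\<D>. measure lborel K *\<^sub>R indicat_real N x) - 0) < \<delta>"
    by blast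
  have "(\<Sum>(x, K)\<in>{p \<in> \<D>. fst p \<in> N}. measure lborel K) < \<delta>"
    if \<D>: "\<D> tagged_division_of {a..b}" and "d fine \<D>" for \<D>
  proof -
    have "(\<Sum>(x, K)\<in>{p \<in> \<D>. fst p \<in> N}. measure lborel K)
        = (\<Sum>p\<in>\<D>. if fst p \<in> N then measure lborel (snd p) else 0)"
      by (simp add: sum.inter_filter[OF tagged_division_of_finite[OF \<D>]] case_prod_unfold)
    also have "\<dots> = (\<Sum>(x, K)\<in>\<D>. measure lborel K *\<^sub>R indicat_real N x)"
      by (intro sum.cong refl) (simp add: indicator_def case_prod_unfold)
    also have "\<dots> < \<delta>"
      using d[rule_format, OF conjI[OF \<D> \<open>d fine \<D>\<close>]] by simp
    finally show ?thesis .
  qed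
  with \<open>gauge d\<close> show ?thesis by (intro exI[of _ d]) simp
qed

lemma tagged_division_straddle_sum:
  fixes a b :: real and g \<beta> :: "real \<Rightarrow> real"
  assumes \<D>: "\<D> tagged_division_of {a..b}" and "d fine \<D>"
    and straddle: "\<forall>t x y. t \<in> {a..b} - N \<longrightarrow> x \<le> t \<longrightarrow> t \<le> y \<longrightarrow> {x..y} \<subseteq> d t \<longrightarrow>
      (\<beta> t - e) * (y - x) \<le> g y - g x"
  shows "(\<Sum>(x, K)\<in>{p \<in> \<D>. fst p \<notin> N}. (\<beta> x - e) * measure lborel K)
    \<le> (\<Sum>(x, K)\<in>{p \<in> \<D>. fst p \<notin> N}. g (Sup K) - g (Inf K))"
proof (rule sum_mono)
  fix p assume "p \<in> {p \<in> \<D>. fst p \<notin> N}"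
  then obtain x K where p: "p = (x, K)" "(x, K) \<in> \<D>" "x \<notin> N" by (cases p) auto
  note elem = tagged_division_of_real_elem[OF \<D> p(2)]
  have "K \<subseteq> d x" using \<open>d fine \<D>\<close> p(2) by (rule fineD)
  then have "{Inf K..Sup K} \<subseteq> d x" by (subst elem(1)[symmetric])
  moreover have "measure lborel K = Sup K - Inf K"
    using arg_cong[OF elem(1), of "measure lborel"] elem(3,4) by simp
  moreover have "x \<in> {a..b}" using elem(2-5) by simp
  ultimately show "(case p of (x, K) \<Rightarrow> (\<beta> x - e) * measure lborel K)
      \<le> (case p of (x, K) \<Rightarrow> g (Sup K) - g (Inf K))"
    using straddle \<open>x \<notin> N\<close> elem(3,4) p(1) by simp
qed

text \<open>On a fine tagged division, pieces tagged outside the null set of bad points are controlled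
  by the straddle estimate, and those tagged inside it have small total length, so absolute
  continuity makes their increments small.\<close>

lemma abs_cont_on_decrease_le_integral_approx:
  fixes g \<gamma> :: "real \<Rightarrow> real"
  assumes "a \<le> b" and ac: "abs_cont_on a b g"
    and int: "\<gamma> integrable_on {a..b}" and nonneg: "\<forall>t\<in>{a..b}. 0 \<le> \<gamma> t"
    and der: "AE t in lebesgue. t \<in> {a..b} \<longrightarrow> (\<exists>D. (g has_real_derivative D) (at t) \<and> - \<gamma> t \<le> D)"
    and "e > 0"
  shows "g a - g b \<le> integral {a..b} \<gamma> + e * (b - a + 2)"
proof -
  obtain \<delta> where "\<delta> > 0" and ac\<delta>: "\<forall>\<D> \<E>. \<D> tagged_division_of {a..b} \<longrightarrow> \<E> \<subseteq> \<D> \<longrightarrow>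
      (\<Sum>(x, K)\<in>\<E>. measure lborel K) < \<delta> \<longrightarrow> (\<Sum>(x, K)\<in>\<E>. \<bar>g (Sup K) - g (Inf K)\<bar>) < e"
    using abs_cont_on_tagged_division[OF ac \<open>e > 0\<close>] by blast
  obtain N d where "negligible N" "gauge d" and straddle: "\<forall>t x y. t \<in> {a..b} - N \<longrightarrow>
      x \<le> t \<longrightarrow> t \<le> y \<longrightarrow> {x..y} \<subseteq> d t \<longrightarrow> (- \<gamma> t - e) * (y - x) \<le> g y - g x"
    using AE_lower_derivative_gauge[OF der \<open>e > 0\<close>] by blast
  obtain dN where "gauge dN" and dN: "\<forall>\<D>. \<D> tagged_division_of {a..b} \<and> dN fine \<D> \<longrightarrow>
      (\<Sum>(x, K)\<in>{p \<in> \<D>. fst p \<in> N}. measure lborel K) < \<delta>"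
    using negligible_tagged_division_small[OF \<open>negligible N\<close> \<open>\<delta> > 0\<close>, of a b] by blast
  have "(\<gamma> has_integral integral {a..b} \<gamma>) {a..b}"
    using int by (rule integrable_integral)
  from this[unfolded has_integral_real, rule_format, OF \<open>e > 0\<close>] obtain d\<gamma> where "gauge d\<gamma>"
    and d\<gamma>: "\<forall>\<D>. \<D> tagged_division_of {a..b} \<and> d\<gamma> fine \<D> \<longrightarrow>
      norm ((\<Sum>(x, K)\<in>\<D>. measure lborel K *\<^sub>R \<gamma> x) - integral {a..b} \<gamma>) < e"
    by blast
  obtain \<D> where \<D>: "\<D> tagged_division_of {a..b}" and fine: "(\<lambda>t. d t \<inter> d\<gamma> t \<inter> dN t) fine \<D>"
    using fine_division_exists_real[OF gauge_Int[OF gauge_Int[OF \<open>gauge d\<close> \<open>gauge d\<gamma>\<close>] \<open>gauge dN\<close>]]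
    by blast
  have "d fine \<D>" "d\<gamma> fine \<D>" "dN fine \<D>" using fine by (auto simp: fine_Int)
  have fin: "finite \<D>" using \<D> by blast
  have tag_in: "x \<in> {a..b}" if "(x, K) \<in> \<D>" for x K
    using tagged_division_ofD(2,3)[OF \<D> that] by blast
  define \<G> where "\<G> = {p \<in> \<D>. fst p \<notin> N}"
  define \<B> where "\<B> = {p \<in> \<D>. fst p \<in> N}"
  have "\<G> \<subseteq> \<D>" "\<B> \<subseteq> \<D>" "\<D> = \<G> \<union> \<B>" "\<G> \<inter> \<B> = {}" by (auto simp: \<G>_def \<B>_def)
  then have split: "sum F \<D> = sum F \<G> + sum F \<B>" for F :: "real \<times> real set \<Rightarrow> real"
    using fin by (metis finite_Un sum.union_disjoint)
  have "(\<Sum>(x, K)\<in>\<B>. measure lborel K) < \<delta>"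
    using dN[rule_format, OF conjI[OF \<D> \<open>dN fine \<D>\<close>]] unfolding \<B>_def .
  then have "(\<Sum>(x, K)\<in>\<B>. \<bar>g (Sup K) - g (Inf K)\<bar>) < e"
    by (rule ac\<delta>[rule_format, OF \<D> \<open>\<B> \<subseteq> \<D>\<close>])
  moreover have "- (\<Sum>(x, K)\<in>\<B>. \<bar>g (Sup K) - g (Inf K)\<bar>) \<le> (\<Sum>(x, K)\<in>\<B>. g (Sup K) - g (Inf K))"
    unfolding sum_negf[symmetric] by (rule sum_mono) auto
  moreover have "- (\<Sum>(x, K)\<in>\<G>. measure lborel K * \<gamma> x) - e * (\<Sum>(x, K)\<in>\<G>. measure lborel K)
      \<le> (\<Sum>(x, K)\<in>\<G>. g (Sup K) - g (Inf K))"
    using tagged_division_straddle_sum[OF \<D> \<open>d fine \<D>\<close> straddle] unfolding \<G>_def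
    by (simp add: algebra_simps sum.distrib sum_subtractf sum_negf sum_distrib_left case_prod_unfold)
  moreover have "(\<Sum>(x, K)\<in>\<G>. measure lborel K * \<gamma> x) \<le> (\<Sum>(x, K)\<in>\<D>. measure lborel K * \<gamma> x)"
    using \<open>\<G> \<subseteq> \<D>\<close> nonneg tag_in by (intro sum_mono2 fin) auto
  moreover have "(\<Sum>(x, K)\<in>\<D>. measure lborel K * \<gamma> x) \<le> integral {a..b} \<gamma> + e"
    using d\<gamma>[rule_format, OF conjI[OF \<D> \<open>d\<gamma> fine \<D>\<close>]] by (simp add: abs_less_iff)
  moreover have "(\<Sum>(x, K)\<in>\<G>. measure lborel K) \<le> (\<Sum>(x, K)\<in>\<D>. measure lborel K)"
    using \<open>\<G> \<subseteq> \<D>\<close> by (intro sum_mono2 fin) auto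
  then have "e * (\<Sum>(x, K)\<in>\<G>. measure lborel K) \<le> e * (b - a)"
    using additive_content_tagged_division[of \<D> a b] \<D> \<open>a \<le> b\<close> \<open>e > 0\<close> by simp
  moreover have "(\<Sum>(x, K)\<in>\<D>. g (Sup K) - g (Inf K)) = g b - g a"
    by (rule additive_tagged_division_1[OF \<open>a \<le> b\<close> \<D>])
  ultimately have "g a - g b \<le> integral {a..b} \<gamma> + e * (b - a) + 2 * e"
    using split[of "\<lambda>(x, K). g (Sup K) - g (Inf K)"] by linarith
  then show ?thesis by (simp add: algebra_simps)
qed

lemma abs_cont_on_decrease_le_integral:
  fixes g \<gamma> :: "real \<Rightarrow> real"
  assumes "a \<le> b" and ac: "abs_cont_on a b g"
    and int: "\<gamma> integrable_on {a..b}" and nonneg: "\<forall>t\<in>{a..b}. 0 \<le> \<gamma> t"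
    and der: "AE t in lebesgue. t \<in> {a..b} \<longrightarrow> (\<exists>D. (g has_real_derivative D) (at t) \<and> - \<gamma> t \<le> D)"
  shows "g a - g b \<le> integral {a..b} \<gamma>"
proof (rule field_le_epsilon)
  fix e :: real assume "e > 0"
  then show "g a - g b \<le> integral {a..b} \<gamma> + e"
    using abs_cont_on_decrease_le_integral_approx[OF assms, of "e / (b - a + 2)"] \<open>a \<le> b\<close> by simp
qed

lemma abs_cont_on_abs_diff_le_integral:
  fixes g \<gamma> :: "real \<Rightarrow> real"
  assumes ac: "abs_cont_on a b g"
    and int: "\<gamma> integrable_on {a..b}" and nonneg: "\<forall>t\<in>{a..b}. 0 \<le> \<gamma> t"
    and der: "AE t in lebesgue. t \<in> {a..b} \<longrightarrow> (\<exists>D. (g has_real_derivative D) (at t) \<and> \<bar>D\<bar> \<le> \<gamma> t)"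
    and st: "a \<le> s" "s \<le> t" "t \<le> b"
  shows "\<bar>g t - g s\<bar> \<le> integral {a..b} \<gamma>"
proof -
  have sub: "{s..t} \<subseteq> {a..b}" using st by auto
  have ac': "abs_cont_on s t g" using ac st(1,3) by (rule abs_cont_on_subinterval)
  have int': "\<gamma> integrable_on {s..t}" using integrable_on_subinterval[OF int sub] .
  have nonneg': "\<forall>x\<in>{s..t}. 0 \<le> \<gamma> x" using nonneg sub by blast
  have "AE x in lebesgue. x \<in> {s..t} \<longrightarrow> (\<exists>D. (g has_real_derivative D) (at x) \<and> - \<gamma> x \<le> D)"
    using der by eventually_elim (use sub in \<open>auto simp: abs_le_iff\<close>)
  then have "g s - g t \<le> integral {s..t} \<gamma>"
    by (rule abs_cont_on_decrease_le_integral[OF \<open>s \<le> t\<close> ac' int' nonneg'])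
  moreover have "AE x in lebesgue. x \<in> {s..t} \<longrightarrow>
      (\<exists>D. ((\<lambda>x. - g x) has_real_derivative D) (at x) \<and> - \<gamma> x \<le> D)"
    using der by eventually_elim (use sub in \<open>auto intro: DERIV_minus simp: abs_le_iff\<close>)
  then have "- g s - - g t \<le> integral {s..t} \<gamma>"
    by (rule abs_cont_on_decrease_le_integral[OF \<open>s \<le> t\<close> abs_cont_on_uminus[OF ac'] int' nonneg'])
  moreover have "integral {s..t} \<gamma> \<le> integral {a..b} \<gamma>"
    using nonneg by (intro integral_subset_le[OF sub int' int]) auto
  ultimately show ?thesis by linarith
qed

lemma C1_abs_diff_le_integral_abs:
  fixes u u' :: "real \<Rightarrow> real"
  assumes deriv: "\<And>t. t \<in> {a..b} \<Longrightarrow> (u has_real_derivative u' t) (at t within {a..b})"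
    and cont: "continuous_on {a..b} u'" and "s \<in> {a..b}" "t \<in> {a..b}" "s \<le> t"
  shows "\<bar>u t - u s\<bar> \<le> integral {a..b} (\<lambda>x. \<bar>u' x\<bar>)"
proof -
  have sub: "{s..t} \<subseteq> {a..b}" using assms(3,4) by auto
  have "(u has_vector_derivative u' x) (at x within {s..t})" if "x \<in> {s..t}" for x
    using has_vector_derivative_within_subset[OF deriv[of x, unfolded has_real_derivative_iff_has_vector_derivative] sub]
      sub that by auto
  then have "(u' has_integral (u t - u s)) {s..t}"
    using \<open>s \<le> t\<close> by (intro fundamental_theorem_of_calculus)
  then have "\<bar>u t - u s\<bar> \<le> integral {s..t} (\<lambda>x. \<bar>u' x\<bar>)"
    using continuous_on_subset[OF cont sub]
    by (metis integral_unique integrable_continuous_real continuous_on_rabs integral_norm_bound_integral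
        order_refl real_norm_def)
  also have "\<dots> \<le> integral {a..b} (\<lambda>x. \<bar>u' x\<bar>)"
    using sub cont continuous_on_subset[OF cont sub]
    by (intro integral_subset_le integrable_continuous_real continuous_on_rabs) auto
  finally show ?thesis .
qed

lemma integral_has_real_derivative_at:
  assumes "continuous_on {c..b} g" "x \<in> {c<..<b}"
  shows "((\<lambda>y. integral {c..y} g) has_real_derivative g x) (at x)"
  using integral_has_real_derivative[OF assms(1), of x] assms(2) at_within_interior[of x "{c..b}"]
  by simp

lemma strict_mono_surj_bounded_preimage:
  fixes \<phi> :: "real \<Rightarrow> real"
  assumes mono: "strict_mono \<phi>" and surj: "surj \<phi>"
  shows "\<exists>K>0. \<forall>v. \<bar>\<phi> v\<bar> \<le> R \<longrightarrow> \<bar>v\<bar> \<le> K"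
proof -
  obtain p n where "\<phi> p = R" "\<phi> n = - R" using surj by (metis surjD)
  have "\<bar>v\<bar> \<le> max \<bar>p\<bar> \<bar>n\<bar>" if "\<bar>\<phi> v\<bar> \<le> R" for v
  proof -
    have "\<phi> v \<le> \<phi> p" "\<phi> n \<le> \<phi> v" using that \<open>\<phi> p = R\<close> \<open>\<phi> n = - R\<close> by auto
    then have "v \<le> p" "n \<le> v" using strict_mono_less_eq[OF mono] by auto
    then show ?thesis by linarith
  qed
  then show ?thesis by (intro exI[of _ "max \<bar>p\<bar> \<bar>n\<bar> + 1"]) force
qed

lemma strict_mono_surj_coercive:
  fixes \<phi> :: "real \<Rightarrow> real"
  assumes mono: "strict_mono \<phi>" and surj: "surj \<phi>" and "\<phi> 0 = 0" and "0 \<le> c"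
  shows "\<exists>S\<ge>0. \<forall>s. c * \<bar>s\<bar> - c * S \<le> \<phi> s * s"
proof -
  obtain S where "S > 0" and S: "\<forall>v. \<bar>\<phi> v\<bar> \<le> c \<longrightarrow> \<bar>v\<bar> \<le> S"
    using strict_mono_surj_bounded_preimage[OF mono surj] by blast
  have "c * \<bar>s\<bar> - c * S \<le> \<phi> s * s" for s
  proof -
    have "0 \<le> \<phi> s * s"
      using strict_mono_less_eq[OF mono, of 0 s] strict_mono_less_eq[OF mono, of s 0] \<open>\<phi> 0 = 0\<close>
      by (cases "0 \<le> s") (auto intro: mult_nonpos_nonpos)
    then have sign: "\<phi> s * s = \<bar>\<phi> s\<bar> * \<bar>s\<bar>" by (simp add: abs_mult[symmetric])
    show ?thesis
    proof (cases "\<bar>\<phi> s\<bar> \<le> c")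
      case True
      then have "c * \<bar>s\<bar> \<le> c * S" using S \<open>0 \<le> c\<close> by (simp add: mult_left_mono)
      with \<open>0 \<le> \<phi> s * s\<close> show ?thesis by linarith
    next
      case False
      then have "c * \<bar>s\<bar> \<le> \<bar>\<phi> s\<bar> * \<bar>s\<bar>" by (intro mult_right_mono) auto
      moreover have "0 \<le> c * S" using \<open>S > 0\<close> \<open>0 \<le> c\<close> by simp
      ultimately show ?thesis using sign by linarith
    qed
  qed
  with \<open>S > 0\<close> show ?thesis by (intro exI[of _ S]) auto
qed

locale periodic_solution_setting =
  fixes \<phi> f :: "real \<Rightarrow> real" and h :: "real \<Rightarrow> real \<Rightarrow> real" and T lam :: real
    and u u' :: "real \<Rightarrow> real"
  assumes T_pos: "T > 0" and lam_pos: "0 < lam" and lam_le_1: "lam \<le> 1"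
    and solution: "periodic_solution \<phi> f h T lam u u'"
begin

lemma u_deriv: "t \<in> {0..T} \<Longrightarrow> (u has_real_derivative u' t) (at t within {0..T})"
  and u'_cont: "continuous_on {0..T} u'"
  and u_periodic: "u 0 = u T" and u'_periodic: "u' 0 = u' T"
  and phi_u'_abs_cont: "abs_cont_on 0 T (\<lambda>t. \<phi> (u' t))"
  and equation: "AE t in lebesgue. t \<in> {0..T} \<longrightarrow>
     (\<exists>D. ((\<lambda>s. \<phi> (u' s)) has_real_derivative D) (at t) \<and> D + lam * f (u t) * u' t + lam * h t (u t) = 0)"
  using solution unfolding periodic_solution_def by auto

lemma u_cont: "continuous_on {0..T} u"
  using u_deriv DERIV_continuous continuous_on_eq_continuous_within by blast

lemma u_deriv_at: "t \<in> {0<..<T} \<Longrightarrow> (u has_real_derivative u' t) (at t)"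
  using u_deriv[of t] at_within_interior[of t "{0..T}"] by simp

abbreviation umin where "umin \<equiv> INF t\<in>{0..T}. u t"
abbreviation umax where "umax \<equiv> SUP t\<in>{0..T}. u t"

lemma u_extrema: obtains tmin tmax where "tmin \<in> {0..T}" "tmax \<in> {0..T}"
  "\<And>t. t \<in> {0..T} \<Longrightarrow> u tmin \<le> u t \<and> u t \<le> u tmax" "umin = u tmin" "umax = u tmax"
proof -
  have "{0..T} \<noteq> {}" using T_pos by simp
  then obtain tmin tmax where tmin: "tmin \<in> {0..T}" and tmax: "tmax \<in> {0..T}"
    and extr: "\<And>t. t \<in> {0..T} \<Longrightarrow> u tmin \<le> u t \<and> u t \<le> u tmax"
    using continuous_attains_inf[OF compact_Icc _ u_cont] continuous_attains_sup[OF compact_Icc _ u_cont]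
    by metis
  moreover have "umin = u tmin" "umax = u tmax"
    using extr tmin tmax by (auto intro!: cInf_eq_minimum cSup_eq_maximum)
  ultimately show thesis by (rule that)
qed

lemma u_bounds: "t \<in> {0..T} \<Longrightarrow> umin \<le> u t \<and> u t \<le> umax"
  by (rule u_extrema) auto

lemma oscillation_le_L1: "umax - umin \<le> integral {0..T} (\<lambda>t. \<bar>u' t\<bar>)"
proof (rule u_extrema)
  fix tmin tmax assume t: "tmin \<in> {0..T}" "tmax \<in> {0..T}" "umin = u tmin" "umax = u tmax"
  then show ?thesis
    using C1_abs_diff_le_integral_abs[OF u_deriv u'_cont, of tmin tmax]
      C1_abs_diff_le_integral_abs[OF u_deriv u'_cont, of tmax tmin]
    by (cases "tmin \<le> tmax") auto
qed

lemma critical_point: obtains t0 where "t0 \<in> {0..T}" "u' t0 = 0"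
proof -
  obtain t0 where "0 < t0" "t0 < T" "(u has_real_derivative 0) (at t0)"
    using Rolle[OF T_pos u_periodic u_cont] u_deriv_at real_differentiable_def by force
  with u_deriv_at[of t0] show thesis
    by (intro that[of t0]) (auto dest: DERIV_unique)
qed

lemma multiplier_abs_cont:
  assumes "continuous_on {0..T} (\<lambda>t. \<phi> (u' t))"
  shows "abs_cont_on 0 T (\<lambda>t. \<phi> (u' t) * (u t - c))"
proof -
  obtain B where B: "\<And>t. t \<in> {0..T} \<Longrightarrow> \<bar>\<phi> (u' t)\<bar> \<le> B"
    using continuous_on_Icc_abs_bound[OF assms] by blast
  have "((\<lambda>t. u t - c) has_real_derivative u' t) (at t within {0..T})" if "t \<in> {0..T}" for t
    using DERIV_diff[OF u_deriv[OF that] DERIV_const[of c]] by simp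
  then have "abs_cont_on 0 T (\<lambda>t. u t - c)"
    using u'_cont by (rule abs_cont_on_C1)
  then show ?thesis
  proof (rule abs_cont_on_mult[OF phi_u'_abs_cont, where B = "max B (\<bar>umax\<bar> + \<bar>umin\<bar> + \<bar>c\<bar>)"])
    fix t assume "t \<in> {0..T}"
    show "\<bar>\<phi> (u' t)\<bar> \<le> max B (\<bar>umax\<bar> + \<bar>umin\<bar> + \<bar>c\<bar>)"
      using B[OF \<open>t \<in> {0..T}\<close>] by simp
    show "\<bar>u t - c\<bar> \<le> max B (\<bar>umax\<bar> + \<bar>umin\<bar> + \<bar>c\<bar>)"
      using u_bounds[OF \<open>t \<in> {0..T}\<close>] by linarith
  qed
qed

lemma multiplier_has_derivative:
  assumes "t \<in> {0<..<T}"
    and phi_u': "((\<lambda>s. \<phi> (u' s)) has_real_derivative D) (at t)"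
    and eq: "D + lam * f (u t) * u' t + lam * h t (u t) = 0"
    and q: "(q has_real_derivative lam * (f (u t) * (u t - c) * u' t) - \<phi> (u' t) * u' t) (at t)"
  shows "((\<lambda>s. \<phi> (u' s) * (u s - c) + q s) has_real_derivative - lam * (u t - c) * h t (u t)) (at t)"
proof -
  have "((\<lambda>s. \<phi> (u' s) * (u s - c) + q s) has_real_derivative
      D * (u t - c) + (u' t - 0) * \<phi> (u' t) + (lam * (f (u t) * (u t - c) * u' t) - \<phi> (u' t) * u' t)) (at t)"
    by (rule DERIV_add[OF DERIV_mult[OF phi_u' DERIV_diff[OF u_deriv_at[OF \<open>t \<in> {0<..<T}\<close>] DERIV_const]] q])
  moreover have "D = - lam * f (u t) * u' t - lam * h t (u t)"
    using eq by linarith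
  ultimately show ?thesis
    by (simp add: algebra_simps)
qed

lemma energy_derivative_bound:
  assumes q: "\<And>t. t \<in> {0<..<T} \<Longrightarrow>
      (q has_real_derivative lam * (f (u t) * (u t - umin) * u' t) - \<phi> (u' t) * u' t) (at t)"
    and nonneg: "\<forall>t\<in>{0..T}. 0 \<le> \<gamma> t"
    and h_le: "AE t in lebesgue. t \<in> {0..T} \<longrightarrow> (\<forall>x. h t x \<le> \<gamma> t)"
  shows "AE t in lebesgue. t \<in> {0..T} \<longrightarrow> (\<exists>D. ((\<lambda>s. \<phi> (u' s) * (u s - umin) + q s)
      has_real_derivative D) (at t) \<and> - ((umax - umin) * \<gamma> t) \<le> D)"
proof -
  have "AE t in lebesgue. t \<notin> {0, T}"
    by (rule AE_not_in) (simp add: negligible_iff_null_sets[symmetric])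
  with equation h_le show ?thesis
  proof (eventually_elim, intro impI)
    case (elim t)
    assume "t \<in> {0..T}"
    with elim(3) have "t \<in> {0<..<T}" by auto
    from elim(1) \<open>t \<in> {0..T}\<close> obtain D where "((\<lambda>s. \<phi> (u' s)) has_real_derivative D) (at t)"
      and "D + lam * f (u t) * u' t + lam * h t (u t) = 0" by blast
    from multiplier_has_derivative[OF \<open>t \<in> {0<..<T}\<close> this q[OF \<open>t \<in> {0<..<T}\<close>]]
    have deriv: "((\<lambda>s. \<phi> (u' s) * (u s - umin) + q s) has_real_derivative
        - lam * (u t - umin) * h t (u t)) (at t)" .
    have "h t (u t) \<le> \<gamma> t" "0 \<le> \<gamma> t" using elim(2) nonneg \<open>t \<in> {0..T}\<close> by auto
    then have "lam * h t (u t) \<le> lam * \<gamma> t"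
      using lam_pos by (simp add: mult_left_mono)
    also have "\<dots> \<le> \<gamma> t"
      using \<open>0 \<le> \<gamma> t\<close> lam_pos lam_le_1 by (simp add: mult_left_le_one_le)
    finally have "(u t - umin) * (lam * h t (u t)) \<le> (u t - umin) * \<gamma> t"
      using u_bounds[OF \<open>t \<in> {0..T}\<close>] by (simp add: mult_left_mono)
    also have "\<dots> \<le> (umax - umin) * \<gamma> t"
      using u_bounds[OF \<open>t \<in> {0..T}\<close>] \<open>0 \<le> \<gamma> t\<close> by (simp add: mult_right_mono)
    finally have "(u t - umin) * (lam * h t (u t)) \<le> (umax - umin) * \<gamma> t" .
    with deriv show "\<exists>D. ((\<lambda>s. \<phi> (u' s) * (u s - umin) + q s) has_real_derivative D) (at t) \<and>
        - ((umax - umin) * \<gamma> t) \<le> D"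
      by (intro exI[of _ "- lam * (u t - umin) * h t (u t)"]) (simp add: algebra_simps)
  qed
qed

lemma energy_estimate:
  assumes cphi: "continuous_on UNIV \<phi>" and cf: "continuous_on UNIV f"
    and int: "\<gamma> integrable_on {0..T}" and nonneg: "\<forall>t\<in>{0..T}. 0 \<le> \<gamma> t"
    and h_le: "AE t in lebesgue. t \<in> {0..T} \<longrightarrow> (\<forall>x. h t x \<le> \<gamma> t)"
  shows "integral {0..T} (\<lambda>t. \<phi> (u' t) * u' t) \<le> (umax - umin) * integral {0..T} \<gamma>"
proof -
  \<comment> \<open>the \<open>f\<close>-term of the equation is the derivative of a primitive of \<open>k\<close> along \<open>u\<close>, so it drops
    out by periodicity; \<open>E\<close> absorbs \<open>\<phi>(u') u'\<close>\<close>
  define k where "k x = f x * (x - umin)" for x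
  define E where "E t = integral {0..t} (\<lambda>s. \<phi> (u' s) * u' s)" for t
  define q where "q t = lam * integral {umin - 1..u t} k - E t" for t
  define q' where "q' t = lam * (k (u t) * u' t) - \<phi> (u' t) * u' t" for t
  have phi_u'_cont: "continuous_on {0..T} (\<lambda>t. \<phi> (u' t))"
    using continuous_on_compose2[OF cphi u'_cont] by auto
  have E_cont: "continuous_on {0..T} (\<lambda>t. \<phi> (u' t) * u' t)"
    using phi_u'_cont u'_cont by (intro continuous_intros)
  have k_cont: "continuous_on {umin - 1..umax + 1} k"
    unfolding k_def using cf by (intro continuous_intros) (auto intro: continuous_on_subset)
  have q_deriv: "(q has_real_derivative q' t) (at t within {0..T})" if "t \<in> {0..T}" for t
  proof -
    have "((\<lambda>x. integral {umin - 1..x} k) has_real_derivative k (u t)) (at (u t))"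
      using u_bounds[OF that] by (intro integral_has_real_derivative_at[OF k_cont]) auto
    from DERIV_diff[OF DERIV_cmult[OF DERIV_chain2[OF this u_deriv[OF that]]]
        integral_has_real_derivative[OF E_cont that]]
    show ?thesis unfolding q_def q'_def E_def by (simp add: mult.assoc)
  qed
  have "continuous_on {0..T} (\<lambda>t. k (u t))"
    using continuous_on_compose2[OF k_cont u_cont] u_bounds by force
  then have q'_cont: "continuous_on {0..T} q'"
    unfolding q'_def using u'_cont phi_u'_cont by (intro continuous_intros)
  have "abs_cont_on 0 T (\<lambda>t. \<phi> (u' t) * (u t - umin) + q t)"
    using multiplier_abs_cont[OF phi_u'_cont] abs_cont_on_C1[OF q_deriv q'_cont] by (rule abs_cont_on_add)
  moreover have "AE t in lebesgue. t \<in> {0..T} \<longrightarrow> (\<exists>D. ((\<lambda>s. \<phi> (u' s) * (u s - umin) + q s)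
      has_real_derivative D) (at t) \<and> - ((umax - umin) * \<gamma> t) \<le> D)"
  proof (rule energy_derivative_bound[OF _ nonneg h_le])
    fix t assume "t \<in> {0<..<T}"
    then show "(q has_real_derivative lam * (f (u t) * (u t - umin) * u' t) - \<phi> (u' t) * u' t) (at t)"
      using q_deriv[of t] at_within_interior[of t "{0..T}"] by (simp add: q'_def k_def)
  qed
  ultimately have "\<phi> (u' 0) * (u 0 - umin) + q 0 - (\<phi> (u' T) * (u T - umin) + q T)
      \<le> integral {0..T} (\<lambda>t. (umax - umin) * \<gamma> t)"
    using T_pos u_bounds[of 0] nonneg integrable_on_mult_right[OF int]
    by (intro abs_cont_on_decrease_le_integral) auto
  then show ?thesis
    unfolding q_def E_def using u_periodic u'_periodic by simp
qed

lemma phi_u'_derivative_bound: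
  assumes h_bound: "\<forall>t\<in>{0..T}. \<bar>h t (u t)\<bar> \<le> mh t" and f_bound: "\<forall>t\<in>{0..T}. \<bar>f (u t)\<bar> \<le> F"
  shows "AE t in lebesgue. t \<in> {0..T} \<longrightarrow>
    (\<exists>D. ((\<lambda>s. \<phi> (u' s)) has_real_derivative D) (at t) \<and> \<bar>D\<bar> \<le> F * \<bar>u' t\<bar> + mh t)"
  using equation
proof (eventually_elim, intro impI)
  case (elim t)
  assume "t \<in> {0..T}"
  then obtain D where "((\<lambda>s. \<phi> (u' s)) has_real_derivative D) (at t)"
    and "D + lam * f (u t) * u' t + lam * h t (u t) = 0" using elim by blast
  moreover have "\<bar>lam * f (u t) * u' t\<bar> \<le> \<bar>f (u t)\<bar> * \<bar>u' t\<bar>"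
    using lam_pos lam_le_1 by (simp add: abs_mult mult_left_le_one_le mult.assoc)
  moreover have "\<bar>f (u t)\<bar> * \<bar>u' t\<bar> \<le> F * \<bar>u' t\<bar>"
    using f_bound \<open>t \<in> {0..T}\<close> by (intro mult_right_mono) auto
  moreover have "\<bar>lam * h t (u t)\<bar> \<le> \<bar>h t (u t)\<bar>"
    using lam_pos lam_le_1 by (simp add: abs_mult mult_left_le_one_le)
  moreover have "\<bar>h t (u t)\<bar> \<le> mh t"
    using h_bound \<open>t \<in> {0..T}\<close> by blast
  moreover from \<open>D + lam * f (u t) * u' t + lam * h t (u t) = 0\<close>
  have "\<bar>D\<bar> \<le> \<bar>lam * f (u t) * u' t\<bar> + \<bar>lam * h t (u t)\<bar>"
    by (simp add: eq_neg_iff_add_eq_0[symmetric] add.assoc abs_triangle_ineq)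
  ultimately show "\<exists>D. ((\<lambda>s. \<phi> (u' s)) has_real_derivative D) (at t) \<and> \<bar>D\<bar> \<le> F * \<bar>u' t\<bar> + mh t"
    by (intro exI[of _ D]) auto
qed

lemma phi_u'_bound:
  assumes phi0: "\<phi> 0 = 0" and int: "mh integrable_on {0..T}"
    and h_bound: "\<forall>t\<in>{0..T}. \<bar>h t (u t)\<bar> \<le> mh t" and f_bound: "\<forall>t\<in>{0..T}. \<bar>f (u t)\<bar> \<le> F"
    and "t \<in> {0..T}"
  shows "\<bar>\<phi> (u' t)\<bar> \<le> F * integral {0..T} (\<lambda>t. \<bar>u' t\<bar>) + integral {0..T} mh"
proof -
  define G where "G s = F * \<bar>u' s\<bar> + mh s" for s
  have "(\<lambda>s. F * \<bar>u' s\<bar>) integrable_on {0..T}"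
    using u'_cont by (intro integrable_on_mult_right integrable_continuous_real continuous_intros)
  then have G_int: "G integrable_on {0..T}"
    and G_integral: "integral {0..T} G = F * integral {0..T} (\<lambda>t. \<bar>u' t\<bar>) + integral {0..T} mh"
    unfolding G_def using int by (auto intro: integrable_add simp: integral_add)
  have "0 \<le> F" using f_bound T_pos by force
  have G_nonneg: "\<forall>s\<in>{0..T}. 0 \<le> G s"
  proof
    fix s assume "s \<in> {0..T}"
    then have "0 \<le> mh s" using h_bound by (meson abs_ge_zero order_trans)
    then show "0 \<le> G s" unfolding G_def using \<open>0 \<le> F\<close> by simp
  qed
  obtain t0 where "t0 \<in> {0..T}" "u' t0 = 0" by (rule critical_point)
  then have "\<bar>\<phi> (u' t) - \<phi> (u' t0)\<bar> \<le> integral {0..T} G"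
    using abs_cont_on_abs_diff_le_integral[OF phi_u'_abs_cont G_int G_nonneg
        phi_u'_derivative_bound[OF h_bound f_bound, folded G_def], of "min t t0" "max t t0"]
      \<open>t \<in> {0..T}\<close> by (cases "t \<le> t0") (auto simp: abs_minus_commute)
  then show ?thesis
    using \<open>u' t0 = 0\<close> phi0 G_integral by simp
qed

lemma derivative_L1_bound:
  assumes cphi: "continuous_on UNIV \<phi>" and "0 \<le> G"
    and coercive: "\<forall>s. (G + 1) * \<bar>s\<bar> - (G + 1) * S \<le> \<phi> s * s"
    and energy: "integral {0..T} (\<lambda>t. \<phi> (u' t) * u' t) \<le> (umax - umin) * G"
  shows "integral {0..T} (\<lambda>t. \<bar>u' t\<bar>) \<le> (G + 1) * S * T"
proof -
  define L where "L = integral {0..T} (\<lambda>t. \<bar>u' t\<bar>)"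
  have abs_int: "(\<lambda>t. (G + 1) * \<bar>u' t\<bar>) integrable_on {0..T}"
    using u'_cont by (intro integrable_continuous_real continuous_intros)
  have "(\<lambda>t. \<phi> (u' t) * u' t) integrable_on {0..T}"
    using continuous_on_compose2[OF cphi u'_cont] u'_cont
    by (intro integrable_continuous_real continuous_intros) auto
  then have "integral {0..T} (\<lambda>t. (G + 1) * \<bar>u' t\<bar> - (G + 1) * S)
      \<le> integral {0..T} (\<lambda>t. \<phi> (u' t) * u' t)"
    using abs_int coercive by (intro integral_le integrable_diff) auto
  moreover have "integral {0..T} (\<lambda>t. (G + 1) * \<bar>u' t\<bar> - (G + 1) * S)
      = integral {0..T} (\<lambda>t. (G + 1) * \<bar>u' t\<bar>) - integral {0..T} (\<lambda>t. (G + 1) * S)"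
    by (rule integral_diff[OF abs_int integrable_const_ivl])
  moreover have "\<dots> = (G + 1) * L - (G + 1) * S * T"
    using T_pos by (simp add: L_def mult_ac)
  moreover have "(umax - umin) * G \<le> L * G"
    using oscillation_le_L1 \<open>0 \<le> G\<close> unfolding L_def by (rule mult_right_mono)
  ultimately have "(G + 1) * L - (G + 1) * S * T \<le> L * G"
    using energy by linarith
  then show ?thesis unfolding L_def[symmetric] by (simp add: algebra_simps)
qed

end

lemma periodic_solutions_a_priori_bound:
  fixes \<phi> \<gamma> :: "real \<Rightarrow> real"
  assumes "T > 0" and mono: "strict_mono \<phi>" and surj: "surj \<phi>" and "\<phi> 0 = 0"
    and cphi: "continuous_on UNIV \<phi>" and int: "\<gamma> integrable_on {0..T}" and nonneg: "\<forall>t\<in>{0..T}. 0 \<le> \<gamma> t"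
  shows "\<exists>K0. \<forall>f h lam u u'. continuous_on UNIV f \<and>
    (AE t in lebesgue. t \<in> {0..T} \<longrightarrow> (\<forall>x. h t x \<le> \<gamma> t)) \<and>
    0 < lam \<and> lam \<le> 1 \<and> periodic_solution \<phi> f h T lam u u' \<longrightarrow>
    (SUP t\<in>{0..T}. u t) - (INF t\<in>{0..T}. u t) \<le> K0 \<and> integral {0..T} (\<lambda>t. \<bar>u' t\<bar>) \<le> K0"
proof -
  define G where "G = integral {0..T} \<gamma>"
  have "0 \<le> G" unfolding G_def using integral_nonneg[OF int] nonneg by blast
  then obtain S where coercive: "\<forall>s. (G + 1) * \<bar>s\<bar> - (G + 1) * S \<le> \<phi> s * s"
    using strict_mono_surj_coercive[OF mono surj \<open>\<phi> 0 = 0\<close>, of "G + 1"] by auto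
  have "(SUP t\<in>{0..T}. u t) - (INF t\<in>{0..T}. u t) \<le> (G + 1) * S * T \<and>
      integral {0..T} (\<lambda>t. \<bar>u' t\<bar>) \<le> (G + 1) * S * T"
    if "continuous_on UNIV f" "AE t in lebesgue. t \<in> {0..T} \<longrightarrow> (\<forall>x. h t x \<le> \<gamma> t)"
      "0 < lam" "lam \<le> 1" "periodic_solution \<phi> f h T lam u u'" for f h lam u u'
  proof -
    interpret periodic_solution_setting \<phi> f h T lam u u'
      using \<open>T > 0\<close> that(3-5) by unfold_locales
    have "integral {0..T} (\<lambda>t. \<bar>u' t\<bar>) \<le> (G + 1) * S * T"
      using derivative_L1_bound[OF cphi \<open>0 \<le> G\<close> coercive]
        energy_estimate[OF cphi that(1) int nonneg that(2)] by (simp add: G_def)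
    with oscillation_le_L1 show ?thesis by linarith
  qed
  then show ?thesis by blast
qed

lemma periodic_solutions_derivative_bounded:
  fixes \<phi> f :: "real \<Rightarrow> real" and h :: "real \<Rightarrow> real \<Rightarrow> real"
  assumes "T > 0" and mono: "strict_mono \<phi>" and surj: "surj \<phi>" and "\<phi> 0 = 0"
    and cf: "continuous_on UNIV f" and car: "caratheodory T h"
    and L1: "\<forall>lam u u'. 0 < lam \<and> lam \<le> 1 \<and> periodic_solution \<phi> f h T lam u u' \<longrightarrow>
      integral {0..T} (\<lambda>t. \<bar>u' t\<bar>) \<le> K0"
  shows "\<exists>K1>0. \<forall>lam u u'. 0 < lam \<and> lam \<le> 1 \<and> periodic_solution \<phi> f h T lam u u' \<and>
    (\<forall>t\<in>{0..T}. l1 \<le> u t \<and> u t \<le> l2) \<longrightarrow> (\<forall>t\<in>{0..T}. \<bar>u' t\<bar> \<le> K1)"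
proof -
  have "\<forall>r>0. \<exists>m. m integrable_on {0..T} \<and> (\<forall>t\<in>{0..T}. \<forall>x. \<bar>x\<bar> \<le> r \<longrightarrow> \<bar>h t x\<bar> \<le> m t)"
    using car unfolding caratheodory_def by blast
  moreover have "0 < \<bar>l1\<bar> + \<bar>l2\<bar> + 1"
    using abs_ge_zero[of l1] abs_ge_zero[of l2] by linarith
  ultimately obtain mh where mh_int: "mh integrable_on {0..T}"
    and mh: "\<forall>t\<in>{0..T}. \<forall>x. \<bar>x\<bar> \<le> \<bar>l1\<bar> + \<bar>l2\<bar> + 1 \<longrightarrow> \<bar>h t x\<bar> \<le> mh t"
    by blast
  obtain F where F: "\<And>x. x \<in> {l1..l2} \<Longrightarrow> \<bar>f x\<bar> \<le> F"
    using continuous_on_Icc_abs_bound[OF continuous_on_subset[OF cf]] by blast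
  obtain K1 where "K1 > 0" and K1: "\<forall>v. \<bar>\<phi> v\<bar> \<le> F * K0 + integral {0..T} mh \<longrightarrow> \<bar>v\<bar> \<le> K1"
    using strict_mono_surj_bounded_preimage[OF mono surj] by blast
  have "\<bar>u' t\<bar> \<le> K1"
    if "0 < lam" "lam \<le> 1" "periodic_solution \<phi> f h T lam u u'"
      and range: "\<forall>t\<in>{0..T}. l1 \<le> u t \<and> u t \<le> l2" and "t \<in> {0..T}" for lam u u' t
  proof -
    interpret periodic_solution_setting \<phi> f h T lam u u'
      using \<open>T > 0\<close> that(1-3) by unfold_locales
    have f_bound: "\<forall>t\<in>{0..T}. \<bar>f (u t)\<bar> \<le> F" using F range by auto
    then have "0 \<le> F" using \<open>T > 0\<close> by force
    have "\<forall>t\<in>{0..T}. \<bar>h t (u t)\<bar> \<le> mh t" using mh range by force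
    then have "\<bar>\<phi> (u' t)\<bar> \<le> F * integral {0..T} (\<lambda>t. \<bar>u' t\<bar>) + integral {0..T} mh"
      using phi_u'_bound[OF \<open>\<phi> 0 = 0\<close> mh_int _ f_bound \<open>t \<in> {0..T}\<close>] by blast
    also have "\<dots> \<le> F * K0 + integral {0..T} mh"
      using L1 that(1-3) \<open>0 \<le> F\<close> by (simp add: mult_left_mono)
    finally show ?thesis using K1 by blast
  qed
  with \<open>K1 > 0\<close> show ?thesis by blast
qed

theorem lemma2p5:
  fixes \<phi> :: "real \<Rightarrow> real" and \<gamma> :: "real \<Rightarrow> real" and T :: real
  assumes "T > 0"
    and "strict_mono \<phi>" and "\<exists>\<psi>. homeomorphism UNIV UNIV \<phi> \<psi>" and "\<phi> 0 = 0"
    and "\<gamma> absolutely_integrable_on {0..T}" and "\<forall>t\<in>{0..T}. \<gamma> t \<ge> 0"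
  shows
    "(\<exists>K0. \<forall>f h lam u u'.
        continuous_on UNIV f \<and> caratheodory T h \<and>
        (AE t in lebesgue. t \<in> {0..T} \<longrightarrow> (\<forall>x. h t x \<le> \<gamma> t)) \<and>
        0 < lam \<and> lam \<le> 1 \<and> periodic_solution \<phi> f h T lam u u'
        \<longrightarrow> (SUP t\<in>{0..T}. u t) - (INF t\<in>{0..T}. u t) \<le> K0 \<and>
            integral {0..T} (\<lambda>t. \<bar>u' t\<bar>) \<le> K0)
     \<and>
     (\<forall>f h. continuous_on UNIV f \<and> caratheodory T h \<and>
        (AE t in lebesgue. t \<in> {0..T} \<longrightarrow> (\<forall>x. h t x \<le> \<gamma> t)) \<longrightarrow>
        (\<forall>l1 l2. l1 < l2 \<longrightarrow>
          (\<exists>K1>0. \<forall>lam u u'.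
             0 < lam \<and> lam \<le> 1 \<and> periodic_solution \<phi> f h T lam u u' \<and>
             (\<forall>t\<in>{0..T}. l1 \<le> u t \<and> u t \<le> l2)
             \<longrightarrow> (\<forall>t\<in>{0..T}. \<bar>u' t\<bar> \<le> K1))))"
proof -
  obtain \<psi> where "homeomorphism UNIV UNIV \<phi> \<psi>" using assms(3) by blast
  then have cphi: "continuous_on UNIV \<phi>" and surj: "surj \<phi>"
    unfolding homeomorphism_def by auto
  have int: "\<gamma> integrable_on {0..T}"
    using assms(5) unfolding absolutely_integrable_on_def by blast
  obtain K0 where K0: "\<forall>f h lam u u'. continuous_on UNIV f \<and>
      (AE t in lebesgue. t \<in> {0..T} \<longrightarrow> (\<forall>x. h t x \<le> \<gamma> t)) \<and>
      0 < lam \<and> lam \<le> 1 \<and> periodic_solution \<phi> f h T lam u u' \<longrightarrow>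
      (SUP t\<in>{0..T}. u t) - (INF t\<in>{0..T}. u t) \<le> K0 \<and> integral {0..T} (\<lambda>t. \<bar>u' t\<bar>) \<le> K0"
    using periodic_solutions_a_priori_bound[OF assms(1,2) surj assms(4) cphi int assms(6)] by blast
  have "\<exists>K1>0. \<forall>lam u u'. 0 < lam \<and> lam \<le> 1 \<and> periodic_solution \<phi> f h T lam u u' \<and>
      (\<forall>t\<in>{0..T}. l1 \<le> u t \<and> u t \<le> l2) \<longrightarrow> (\<forall>t\<in>{0..T}. \<bar>u' t\<bar> \<le> K1)"
    if "continuous_on UNIV f" "caratheodory T h" "AE t in lebesgue. t \<in> {0..T} \<longrightarrow> (\<forall>x. h t x \<le> \<gamma> t)"
    for f h and l1 l2 :: real
    using K0 that by (intro periodic_solutions_derivative_bounded[OF assms(1,2) surj assms(4)]) blast+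
  with K0 show ?thesis by blast
qed

end
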